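(* Let $p\in\mathbb{R}_m[\mathbf{x}]$ with $\mathbf{x}=(x_1,\dots,x_n)$. For every positive integer $d$, $p-B_d(p)+(1+C'_m+C_m)\frac{L(p)}{d}\binom{m+1}{3}n^m\in M_{2\lceil m/2\rceil}(\mathbf{g})$, where $\mathbf{g}=(g_1,\dots,g_n)$ with $g_i:=x_i(1-x_i)$.
   Context: $\mathbb{R}_m[\mathbf{x}]$ is the set of real polynomials of degree at most $m$. The $n$-variate Bernstein approximation of order $d$ is $B_d(p):=\sum_{\mathbf{k}\in\{0,\dots,d\}^n}p\left(\frac{k_1}{d},\dots,\frac{k_n}{d}\right)\prod_{i=1}^n\binom{d}{k_i}x_i^{k_i}(1-x_i)^{d-k_i}$. Writing $p=\sum_{\mathbf{k}}p_{\mathbf{k}}\mathbf{x}^{\mathbf{k}}$, $|\mathbf{k}|=\sum_ik_i$, $\mathbf{k}!=\prod_ik_i!$, define $L(p):=\max_{\mathbf{k}}|p_{\mathbf{k}}|\frac{\mathbf{k}!}{|\mathbf{k}|!}$. $\Sigma[\mathbf{x}]$ denotes sums of squares; $M_r(\mathbf{g}):=\{\sigma_0+\sum_{i=1}^n\sigma_i g_i:\ \sigma_i\in\Sigma[\mathbf{x}],\ \deg\sigma_0\le r,\ \deg(\sigma_ig_i)\le r\}$. For each positive integer $j$, $C_j\le1$ denotes a constant such that $\prod_{i=1}^j x_i+C_j\in M_{2\lceil j/2\rceil}(g_1,\dots,g_j)$ (with $C_1:=0$), and $C'_j:=\sum_{i=1}^j C_i$. *)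

theory Defs
  imports "HOL-Analysis.Analysis" "HOL-Library.Poly_Mapping"
begin

text \<open>Real multivariate polynomials: monomials are finitely supported exponent vectors
  (variable x_(i+1) of the paper is variable index i here), a polynomial maps
  monomials to real coefficients with finite support.\<close>

type_synonym mpoly = "(nat \<Rightarrow>\<^sub>0 nat) \<Rightarrow>\<^sub>0 real"

definition mvar :: "nat \<Rightarrow> mpoly" where
  "mvar i = Poly_Mapping.single (Poly_Mapping.single i 1) 1"

definition mconst :: "real \<Rightarrow> mpoly" where
  "mconst c = Poly_Mapping.single 0 c"

definition mon_deg :: "(nat \<Rightarrow>\<^sub>0 nat) \<Rightarrow> nat" where
  "mon_deg k = (\<Sum>i\<in>Poly_Mapping.keys k. Poly_Mapping.lookup k i)"

definition mon_fact :: "(nat \<Rightarrow>\<^sub>0 nat) \<Rightarrow> real" where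
  "mon_fact k = (\<Prod>i\<in>Poly_Mapping.keys k. fact (Poly_Mapping.lookup k i))"

text \<open>total degree of a polynomial (the zero polynomial gets degree 0)\<close>
definition mdegree :: "mpoly \<Rightarrow> nat" where
  "mdegree p = Max (insert 0 (mon_deg ` Poly_Mapping.keys p))"

definition in_vars :: "nat \<Rightarrow> mpoly \<Rightarrow> bool" where
  "in_vars n p \<longleftrightarrow> (\<forall>k\<in>Poly_Mapping.keys p. Poly_Mapping.keys k \<subseteq> {..<n})"

definition meval :: "mpoly \<Rightarrow> (nat \<Rightarrow> real) \<Rightarrow> real" where
  "meval p x = (\<Sum>k\<in>Poly_Mapping.keys p. Poly_Mapping.lookup p k * (\<Prod>i\<in>Poly_Mapping.keys k. x i ^ Poly_Mapping.lookup k i))"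

definition bernstein :: "nat \<Rightarrow> nat \<Rightarrow> mpoly \<Rightarrow> mpoly" where
  "bernstein n d p =
     (\<Sum>k\<in>PiE {..<n} (\<lambda>_. {..d}).
        mconst (meval p (\<lambda>i. if i < n then real (k i) / real d else 0)) *
        (\<Prod>i<n. mconst (real (d choose k i)) * mvar i ^ k i * (1 - mvar i) ^ (d - k i)))"

definition Lnorm :: "mpoly \<Rightarrow> real" where
  "Lnorm p = Max (insert 0 ((\<lambda>k. \<bar>Poly_Mapping.lookup p k\<bar> * mon_fact k / fact (mon_deg k)) ` Poly_Mapping.keys p))"

definition sos :: "nat \<Rightarrow> mpoly \<Rightarrow> bool" where
  "sos n s \<longleftrightarrow> (\<exists>qs. (\<forall>q\<in>set qs. in_vars n q) \<and> s = sum_list (map (\<lambda>q. q * q) qs))"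

definition qmodule :: "nat \<Rightarrow> nat \<Rightarrow> (nat \<Rightarrow> mpoly) \<Rightarrow> mpoly set" where
  "qmodule n r g = {p. \<exists>s0 s. sos n s0 \<and> mdegree s0 \<le> r \<and>
       (\<forall>i<n. sos n (s i) \<and> mdegree (s i * g i) \<le> r) \<and>
       p = s0 + (\<Sum>i<n. s i * g i)}"

definition gbox :: "nat \<Rightarrow> mpoly" where
  "gbox i = mvar i * (1 - mvar i)"

end

theory Submission
  imports Defs "HOL-Combinatorics.Stirling"
begin

text \<open>
  Expanding (t/d)^a in falling factorials shows that the Bernstein operator maps a monomial x^e to a
  convex combination B_d(x^e) = sum_J w_J x^J over the exponents J <= e, whose weight at J = e is
  prod_i d(d-1)...(d-e_i+1)/d^e_i >= 1 - binom(|e|,2)/d. Hence x^e - B_d(x^e) = sum_{J ~= e} w_J (x^e - x^J)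
  with total weight at most binom(|e|,2)/d.

  A difference of two monomials of degree at most m lies in the quadratic module once 1 + C'_m is
  added, because both 1 - x^J and x^J + C'_m lie in it: the first is built from squares and
  1 - x_i^2 = (1 - x_i)^2 + 2 g_i, the second from the certificate for x_1...x_j + C_j applied to the
  variables of odd exponent. Summing over the monomials of p with |p_k| <= L(p) |k|!/k! and
  sum_{|k| = j} j!/k! <= n^j gives the constant (1 + C'_m) L(p)/d sum_{j<=m} binom(j,2) n^m, which is
  (1 + C'_m) L(p)/d binom(m+1,3) n^m.
\<close>

lemma mconst_mult: "mconst a * mconst b = mconst (a * b)"
  unfolding mconst_def by (simp add: mult_single)

lemma mconst_add: "mconst (a + b) = mconst a + mconst b"
  unfolding mconst_def by (simp add: single_add)

lemma mconst_diff: "mconst (a - b) = mconst a - mconst b"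
  unfolding mconst_def by (simp add: single_diff)

lemma mconst_uminus: "mconst (- a) = - mconst a"
  unfolding mconst_def by (simp add: single_uminus)

lemma mconst_0 [simp]: "mconst 0 = 0"
  unfolding mconst_def by simp

lemma mconst_1 [simp]: "mconst 1 = 1"
  unfolding mconst_def by simp

lemma mconst_of_nat: "mconst (of_nat k) = of_nat k"
  unfolding mconst_def by simp

lemma mconst_sum: "mconst (sum f A) = (\<Sum>a\<in>A. mconst (f a))"
  by (induction A rule: infinite_finite_induct) (auto simp: mconst_add)

lemma mconst_prod: "mconst (prod f A) = (\<Prod>a\<in>A. mconst (f a))"
  by (induction A rule: infinite_finite_induct) (auto simp: mconst_mult[symmetric])

lemma poly_mapping_sum_single:
  "(p :: 'a \<Rightarrow>\<^sub>0 'b :: comm_monoid_add) =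
     (\<Sum>k\<in>Poly_Mapping.keys p. Poly_Mapping.single k (Poly_Mapping.lookup p k))"
proof (rule poly_mapping_eqI)
  fix k'
  have "Poly_Mapping.lookup (\<Sum>k\<in>Poly_Mapping.keys p. Poly_Mapping.single k (Poly_Mapping.lookup p k)) k'
      = (\<Sum>k\<in>Poly_Mapping.keys p. if k = k' then Poly_Mapping.lookup p k else 0)"
    by (simp add: lookup_sum lookup_single when_def)
  also have "\<dots> = Poly_Mapping.lookup p k'"
    by (simp add: sum.delta' in_keys_iff)
  finally show "Poly_Mapping.lookup p k' =
      Poly_Mapping.lookup (\<Sum>k\<in>Poly_Mapping.keys p. Poly_Mapping.single k (Poly_Mapping.lookup p k)) k'"
    by simp
qed

definition monom_eval :: "(nat \<Rightarrow> 'a :: comm_ring_1) \<Rightarrow> (nat \<Rightarrow>\<^sub>0 nat) \<Rightarrow> 'a" where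
  "monom_eval v k = (\<Prod>i\<in>Poly_Mapping.keys k. v i ^ Poly_Mapping.lookup k i)"

text \<open>subst_poly c v p maps the coefficients along c and substitutes v i for x_i: with c = mconst
  and v i = mvar (\<sigma> i) it renames the variables, with c = id it evaluates.\<close>

definition subst_poly :: "(real \<Rightarrow> 'a :: comm_ring_1) \<Rightarrow> (nat \<Rightarrow> 'a) \<Rightarrow> mpoly \<Rightarrow> 'a" where
  "subst_poly c v p =
     (\<Sum>k\<in>Poly_Mapping.keys p. c (Poly_Mapping.lookup p k) * monom_eval v k)"

lemma monom_eval_superset:
  "finite S \<Longrightarrow> Poly_Mapping.keys k \<subseteq> S \<Longrightarrow>
     monom_eval v k = (\<Prod>i\<in>S. v i ^ Poly_Mapping.lookup k i)"
  unfolding monom_eval_def by (rule prod.mono_neutral_left) (auto simp: in_keys_iff)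

lemma monom_eval_add: "monom_eval v (k + l) = monom_eval v k * monom_eval v l"
proof -
  let ?S = "Poly_Mapping.keys k \<union> Poly_Mapping.keys l"
  have "monom_eval v (k + l) = (\<Prod>i\<in>?S. v i ^ Poly_Mapping.lookup (k + l) i)"
    by (rule monom_eval_superset) (use keys_add[of k l] in auto)
  also have "\<dots> = (\<Prod>i\<in>?S. v i ^ Poly_Mapping.lookup k i) * (\<Prod>i\<in>?S. v i ^ Poly_Mapping.lookup l i)"
    by (simp add: lookup_add power_add prod.distrib)
  also have "\<dots> = monom_eval v k * monom_eval v l"
    by (simp add: monom_eval_superset[symmetric])
  finally show ?thesis .
qed

lemma monom_eval_single [simp]: "monom_eval v (Poly_Mapping.single i e) = v i ^ e"
  unfolding monom_eval_def by auto

locale coeff_hom =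
  fixes c :: "real \<Rightarrow> 'a :: comm_ring_1"
  assumes hom_0: "c 0 = 0" and hom_1: "c 1 = 1"
    and hom_add: "\<And>a b. c (a + b) = c a + c b"
    and hom_mult: "\<And>a b. c (a * b) = c a * c b"
begin

lemma subst_poly_superset:
  "finite S \<Longrightarrow> Poly_Mapping.keys p \<subseteq> S \<Longrightarrow>
     subst_poly c v p = (\<Sum>k\<in>S. c (Poly_Mapping.lookup p k) * monom_eval v k)"
  unfolding subst_poly_def by (rule sum.mono_neutral_left) (auto simp: in_keys_iff hom_0)

lemma subst_poly_add: "subst_poly c v (p + q) = subst_poly c v p + subst_poly c v q"
proof -
  let ?S = "Poly_Mapping.keys p \<union> Poly_Mapping.keys q"
  have "subst_poly c v (p + q) = (\<Sum>k\<in>?S. c (Poly_Mapping.lookup (p + q) k) * monom_eval v k)"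
    by (rule subst_poly_superset) (use keys_add[of p q] in auto)
  also have "\<dots> = (\<Sum>k\<in>?S. c (Poly_Mapping.lookup p k) * monom_eval v k)
                 + (\<Sum>k\<in>?S. c (Poly_Mapping.lookup q k) * monom_eval v k)"
    by (simp add: lookup_add hom_add distrib_right sum.distrib)
  also have "\<dots> = subst_poly c v p + subst_poly c v q"
    by (simp add: subst_poly_superset[symmetric])
  finally show ?thesis .
qed

lemma subst_poly_0 [simp]: "subst_poly c v 0 = 0"
  unfolding subst_poly_def by simp

lemma subst_poly_uminus: "subst_poly c v (- p) = - subst_poly c v p"
  using subst_poly_add[of v "- p" p] by (simp add: eq_neg_iff_add_eq_0)

lemma subst_poly_diff: "subst_poly c v (p - q) = subst_poly c v p - subst_poly c v q"
  using subst_poly_add[of v p "- q"] subst_poly_uminus[of v q] by simp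

lemma subst_poly_single: "subst_poly c v (Poly_Mapping.single k a) = c a * monom_eval v k"
  unfolding subst_poly_def by (auto simp: hom_0)

lemma subst_poly_sum: "subst_poly c v (sum f A) = (\<Sum>a\<in>A. subst_poly c v (f a))"
  by (induction A rule: infinite_finite_induct) (auto simp: subst_poly_add)

lemma subst_poly_mult: "subst_poly c v (p * q) = subst_poly c v p * subst_poly c v q"
proof -
  have "p * q = (\<Sum>k\<in>Poly_Mapping.keys p. Poly_Mapping.single k (Poly_Mapping.lookup p k))
              * (\<Sum>l\<in>Poly_Mapping.keys q. Poly_Mapping.single l (Poly_Mapping.lookup q l))"
    using poly_mapping_sum_single[of p] poly_mapping_sum_single[of q] by simp
  also have "\<dots> = (\<Sum>k\<in>Poly_Mapping.keys p. \<Sum>l\<in>Poly_Mapping.keys q.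
      Poly_Mapping.single (k + l) (Poly_Mapping.lookup p k * Poly_Mapping.lookup q l))"
    by (simp add: sum_product mult_single)
  finally have "subst_poly c v (p * q) = (\<Sum>k\<in>Poly_Mapping.keys p. \<Sum>l\<in>Poly_Mapping.keys q.
      c (Poly_Mapping.lookup p k) * monom_eval v k * (c (Poly_Mapping.lookup q l) * monom_eval v l))"
    by (simp add: subst_poly_sum subst_poly_single hom_mult monom_eval_add mult_ac)
  also have "\<dots> = subst_poly c v p * subst_poly c v q"
    unfolding subst_poly_def by (simp add: sum_product)
  finally show ?thesis .
qed

lemma subst_poly_1 [simp]: "subst_poly c v 1 = 1"
  using subst_poly_single[of v 0 1] by (simp add: hom_1 monom_eval_def)

lemma subst_poly_mconst [simp]: "subst_poly c v (mconst a) = c a"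
  unfolding mconst_def by (simp add: subst_poly_single monom_eval_def)

lemma subst_poly_mvar [simp]: "subst_poly c v (mvar i) = v i"
  unfolding mvar_def by (simp add: subst_poly_single hom_1)

lemma subst_poly_prod: "subst_poly c v (prod f A) = (\<Prod>a\<in>A. subst_poly c v (f a))"
  by (induction A rule: infinite_finite_induct) (auto simp: subst_poly_mult)

lemma subst_poly_sum_squares:
  "subst_poly c v (sum_list (map (\<lambda>q. q * q) qs)) =
     sum_list (map (\<lambda>q. subst_poly c v q * subst_poly c v q) qs)"
  by (induction qs) (auto simp: subst_poly_add subst_poly_mult)

end

interpretation real_id: coeff_hom "\<lambda>a :: real. a"
  by unfold_locales auto

interpretation poly_const: coeff_hom mconst
  by unfold_locales (auto simp: mconst_add mconst_mult)

lemma meval_eq_subst_poly: "meval p x = subst_poly (\<lambda>a. a) x p"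
  unfolding meval_def subst_poly_def monom_eval_def by simp

lemma mvar_power: "mvar i ^ e = Poly_Mapping.single (Poly_Mapping.single i e) 1"
  unfolding mvar_def
  by (induction e) (auto simp: mult_single single_add[symmetric] add.commute)

lemma monom_eval_mvar: "monom_eval mvar k = Poly_Mapping.single k 1"
proof -
  have prod_single: "(\<Prod>i\<in>A. Poly_Mapping.single (f i) (1 :: real)) = Poly_Mapping.single (\<Sum>i\<in>A. f i) 1"
    if "finite A" for A and f :: "nat \<Rightarrow> nat \<Rightarrow>\<^sub>0 nat"
    using that by (induction A rule: finite_induct) (auto simp: mult_single)
  have "monom_eval mvar k =
      (\<Prod>i\<in>Poly_Mapping.keys k. Poly_Mapping.single (Poly_Mapping.single i (Poly_Mapping.lookup k i)) (1 :: real))"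
    unfolding monom_eval_def by (simp add: mvar_power)
  also have "\<dots> = Poly_Mapping.single k 1"
    using poly_mapping_sum_single[of k] by (simp add: prod_single)
  finally show ?thesis .
qed

lemma subst_poly_mvar_id: "subst_poly mconst mvar p = p"
  unfolding subst_poly_def monom_eval_mvar mconst_def
  using poly_mapping_sum_single[of p] by (simp add: mult_single)

definition deg_le :: "nat \<Rightarrow> mpoly \<Rightarrow> bool" where
  "deg_le r p \<longleftrightarrow> (\<forall>k\<in>Poly_Mapping.keys p. mon_deg k \<le> r)"

lemma mdegree_le_iff: "mdegree p \<le> r \<longleftrightarrow> deg_le r p"
  unfolding mdegree_def deg_le_def by (subst Max_le_iff) auto

lemma mon_deg_superset:
  "finite S \<Longrightarrow> Poly_Mapping.keys k \<subseteq> S \<Longrightarrow> mon_deg k = (\<Sum>i\<in>S. Poly_Mapping.lookup k i)"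
  unfolding mon_deg_def by (rule sum.mono_neutral_left) (auto simp: in_keys_iff)

lemma mon_deg_add: "mon_deg (k + l) = mon_deg k + mon_deg l"
proof -
  let ?S = "Poly_Mapping.keys k \<union> Poly_Mapping.keys l"
  have "mon_deg (k + l) = (\<Sum>i\<in>?S. Poly_Mapping.lookup (k + l) i)"
    by (rule mon_deg_superset) (use keys_add[of k l] in auto)
  also have "\<dots> = mon_deg k + mon_deg l"
    by (simp add: lookup_add sum.distrib mon_deg_superset[symmetric])
  finally show ?thesis .
qed

lemma deg_le_add: "deg_le r p \<Longrightarrow> deg_le r q \<Longrightarrow> deg_le r (p + q)"
  unfolding deg_le_def using keys_add[of p q] by blast

lemma deg_le_diff: "deg_le r p \<Longrightarrow> deg_le r q \<Longrightarrow> deg_le r (p - q)"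
  unfolding deg_le_def using keys_diff[of p q] by blast

lemma deg_le_mono: "r \<le> s \<Longrightarrow> deg_le r p \<Longrightarrow> deg_le s p"
  unfolding deg_le_def by force

lemma deg_le_mult: "deg_le r p \<Longrightarrow> deg_le s q \<Longrightarrow> deg_le (r + s) (p * q)"
  unfolding deg_le_def using keys_mult[of p q] by (force simp: mon_deg_add intro: add_mono)

lemma deg_le_mconst [simp]: "deg_le r (mconst a)"
  unfolding deg_le_def mconst_def by (auto simp: mon_deg_def)

lemma deg_le_one [simp]: "deg_le r 1"
  unfolding deg_le_def by (auto simp: mon_deg_def)

lemma deg_le_mvar: "deg_le 1 (mvar i)"
  unfolding deg_le_def mvar_def by (auto simp: mon_deg_def)

lemma deg_le_power: "deg_le r p \<Longrightarrow> deg_le (k * r) (p ^ k)"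
  by (induction k) (auto dest: deg_le_mult)

lemma deg_le_0 [simp]: "deg_le r 0"
  unfolding deg_le_def by simp

lemma deg_le_sum: "(\<And>a. a \<in> A \<Longrightarrow> deg_le r (f a)) \<Longrightarrow> deg_le r (sum f A)"
  by (induction A rule: infinite_finite_induct) (auto intro: deg_le_add)

lemma deg_le_prod: "(\<And>a. a \<in> A \<Longrightarrow> deg_le (r a) (f a)) \<Longrightarrow> deg_le (sum r A) (prod f A)"
  by (induction A rule: infinite_finite_induct) (auto dest: deg_le_mult)

lemma in_vars_add: "in_vars n p \<Longrightarrow> in_vars n q \<Longrightarrow> in_vars n (p + q)"
  unfolding in_vars_def using keys_add[of p q] by blast

lemma in_vars_diff: "in_vars n p \<Longrightarrow> in_vars n q \<Longrightarrow> in_vars n (p - q)"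
  unfolding in_vars_def using keys_diff[of p q] by blast

lemma in_vars_mult: "in_vars n p \<Longrightarrow> in_vars n q \<Longrightarrow> in_vars n (p * q)"
proof -
  have keys_add_exp: "Poly_Mapping.keys (a + b) = Poly_Mapping.keys a \<union> Poly_Mapping.keys b"
    for a b :: "nat \<Rightarrow>\<^sub>0 nat"
    by (auto simp: in_keys_iff lookup_add)
  show "in_vars n p \<Longrightarrow> in_vars n q \<Longrightarrow> in_vars n (p * q)"
    unfolding in_vars_def using keys_mult[of p q] by (force simp: keys_add_exp)
qed

lemma in_vars_mconst [simp]: "in_vars n (mconst a)"
  unfolding in_vars_def mconst_def by auto

lemma in_vars_one [simp]: "in_vars n 1"
  unfolding in_vars_def by auto

lemma in_vars_mvar: "i < n \<Longrightarrow> in_vars n (mvar i)"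
  unfolding in_vars_def mvar_def by auto

lemma in_vars_power: "in_vars n p \<Longrightarrow> in_vars n (p ^ k)"
  by (induction k) (auto intro: in_vars_mult)

lemma in_vars_0 [simp]: "in_vars n 0"
  unfolding in_vars_def by simp

lemma in_vars_sum: "(\<And>a. a \<in> A \<Longrightarrow> in_vars n (f a)) \<Longrightarrow> in_vars n (sum f A)"
  by (induction A rule: infinite_finite_induct) (auto intro: in_vars_add)

lemma in_vars_prod: "(\<And>a. a \<in> A \<Longrightarrow> in_vars n (f a)) \<Longrightarrow> in_vars n (prod f A)"
  by (induction A rule: infinite_finite_induct) (auto intro: in_vars_mult)

section \<open>Truncated quadratic modules\<close>

lemma sos_0 [simp]: "sos n 0"
  unfolding sos_def by (rule exI[of _ "[]"]) auto

lemma sos_add: "sos n a \<Longrightarrow> sos n b \<Longrightarrow> sos n (a + b)"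
proof -
  assume "sos n a" "sos n b"
  then obtain qs rs where "\<forall>x\<in>set qs. in_vars n x" "a = sum_list (map (\<lambda>q. q * q) qs)"
      "\<forall>x\<in>set rs. in_vars n x" "b = sum_list (map (\<lambda>q. q * q) rs)"
    unfolding sos_def by blast
  then show "sos n (a + b)"
    unfolding sos_def by (intro exI[of _ "qs @ rs"]) auto
qed

lemma sos_square: "in_vars n q \<Longrightarrow> sos n (q * q)"
  unfolding sos_def by (rule exI[of _ "[q]"]) auto

lemma sos_mult_square: "in_vars n q \<Longrightarrow> sos n s \<Longrightarrow> sos n (q * q * s)"
proof -
  assume q: "in_vars n q" and "sos n s"
  then obtain qs where qs: "\<forall>x\<in>set qs. in_vars n x" "s = sum_list (map (\<lambda>q. q * q) qs)"
    unfolding sos_def by blast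
  have "q * q * s = sum_list (map (\<lambda>x. x * x) (map (\<lambda>x. q * x) qs))"
    unfolding qs(2) by (induction qs) (auto simp: algebra_simps)
  then show "sos n (q * q * s)"
    unfolding sos_def using qs(1) q by (intro exI[of _ "map (\<lambda>x. q * x) qs"]) (auto intro: in_vars_mult)
qed

lemma sos_mconst: "c \<ge> 0 \<Longrightarrow> sos n (mconst c)"
  using sos_square[of n "mconst (sqrt c)"] by (simp add: mconst_mult)

lemma qmodule_iff:
  "a \<in> qmodule n r g \<longleftrightarrow> (\<exists>s0 s. sos n s0 \<and> deg_le r s0 \<and>
     (\<forall>i<n. sos n (s i) \<and> deg_le r (s i * g i)) \<and> a = s0 + (\<Sum>i<n. s i * g i))"
  unfolding qmodule_def mdegree_le_iff by simp

lemma qmodule_sos: "sos n s \<Longrightarrow> deg_le r s \<Longrightarrow> s \<in> qmodule n r g"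
  unfolding qmodule_iff by (rule exI[of _ s], rule exI[of _ "\<lambda>_. 0"]) (auto simp: deg_le_def)

lemma qmodule_0 [simp]: "0 \<in> qmodule n r g"
  by (rule qmodule_sos) auto

lemma qmodule_add:
  assumes "a \<in> qmodule n r g" "b \<in> qmodule n r g"
  shows "a + b \<in> qmodule n r g"
proof -
  from assms(1) obtain s0 s where A: "sos n s0" "deg_le r s0"
      "\<forall>i<n. sos n (s i) \<and> deg_le r (s i * g i)" "a = s0 + (\<Sum>i<n. s i * g i)"
    unfolding qmodule_iff by blast
  from assms(2) obtain t0 t where B: "sos n t0" "deg_le r t0"
      "\<forall>i<n. sos n (t i) \<and> deg_le r (t i * g i)" "b = t0 + (\<Sum>i<n. t i * g i)"
    unfolding qmodule_iff by blast
  have "a + b = (s0 + t0) + (\<Sum>i<n. (s i + t i) * g i)"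
    using A(4) B(4) by (simp add: distrib_right sum.distrib algebra_simps)
  moreover have "\<forall>i<n. sos n (s i + t i) \<and> deg_le r ((s i + t i) * g i)"
    using A(3) B(3) by (auto simp: distrib_right intro: sos_add deg_le_add)
  ultimately show ?thesis
    unfolding qmodule_iff using A B
    by (intro exI[of _ "s0 + t0"] exI[of _ "\<lambda>i. s i + t i"]) (simp add: sos_add deg_le_add)
qed

lemma qmodule_sum: "(\<And>a. a \<in> A \<Longrightarrow> f a \<in> qmodule n r g) \<Longrightarrow> sum f A \<in> qmodule n r g"
  by (induction A rule: infinite_finite_induct) (auto intro: qmodule_add qmodule_sos)

lemma qmodule_mono: "r \<le> r' \<Longrightarrow> a \<in> qmodule n r g \<Longrightarrow> a \<in> qmodule n r' g"
  unfolding qmodule_iff by (metis deg_le_mono)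

lemma qmodule_mult_square:
  assumes "a \<in> qmodule n r g" "in_vars n q" "deg_le t q"
  shows "q * q * a \<in> qmodule n (r + 2 * t) g"
proof -
  from assms(1) obtain s0 s where A: "sos n s0" "deg_le r s0"
      "\<forall>i<n. sos n (s i) \<and> deg_le r (s i * g i)" "a = s0 + (\<Sum>i<n. s i * g i)"
    unfolding qmodule_iff by blast
  have qq: "deg_le (2 * t) (q * q)"
    using deg_le_mult[OF assms(3) assms(3)] by (simp add: mult_2)
  have "q * q * a = q * q * s0 + (\<Sum>i<n. (q * q * s i) * g i)"
    using A(4) by (simp add: distrib_left sum_distrib_left mult.assoc)
  moreover have "deg_le (r + 2 * t) (q * q * s0)"
    using deg_le_mult[OF qq A(2)] by (simp add: add.commute)
  moreover have "deg_le (r + 2 * t) (q * q * s i * g i)" if "i < n" for i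
    using deg_le_mult[OF qq] A(3) that by (fastforce simp: mult.assoc add.commute)
  ultimately show ?thesis
    unfolding qmodule_iff using A assms(2)
    by (intro exI[of _ "q * q * s0"] exI[of _ "\<lambda>i. q * q * s i"]) (simp add: sos_mult_square)
qed

lemma qmodule_scale: "c \<ge> 0 \<Longrightarrow> a \<in> qmodule n r g \<Longrightarrow> mconst c * a \<in> qmodule n r g"
  using qmodule_mult_square[of a n r g "mconst (sqrt c)" 0] by (simp add: mconst_mult)

lemma qmodule_square: "in_vars n q \<Longrightarrow> deg_le t q \<Longrightarrow> 2 * t \<le> r \<Longrightarrow> q * q \<in> qmodule n r g"
  by (rule qmodule_sos) (auto intro: sos_square deg_le_mono[OF _ deg_le_mult] simp: mult_2)

lemma qmodule_mconst: "c \<ge> 0 \<Longrightarrow> mconst c \<in> qmodule n r g"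
  using qmodule_square[of n "mconst (sqrt c)" 0 r] by (simp add: mconst_mult)

lemma qmodule_eval_nonneg:
  assumes "a \<in> qmodule n r g" "\<And>i. i < n \<Longrightarrow> 0 \<le> meval (g i) x"
  shows "0 \<le> meval a x"
proof -
  have sos_nonneg: "0 \<le> meval s x" if "sos n s" for s
    using that unfolding sos_def meval_eq_subst_poly
    by (auto simp: real_id.subst_poly_sum_squares intro!: sum_list_nonneg)
  from assms(1) obtain s0 s where A: "sos n s0" "\<forall>i<n. sos n (s i)"
      "a = s0 + (\<Sum>i<n. s i * g i)"
    unfolding qmodule_iff by blast
  have "meval a x = meval s0 x + (\<Sum>i<n. meval (s i) x * meval (g i) x)"
    unfolding A(3) meval_eq_subst_poly
    by (simp add: real_id.subst_poly_add real_id.subst_poly_sum real_id.subst_poly_mult)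
  also have "\<dots> \<ge> 0"
    using A assms(2) by (intro add_nonneg_nonneg sum_nonneg mult_nonneg_nonneg) (auto intro: sos_nonneg)
  finally show ?thesis .
qed

section \<open>Certificates for monomials on the unit box\<close>

lemma deg_le_gbox: "deg_le 2 (gbox i)"
  unfolding gbox_def
  using deg_le_mult[OF deg_le_mvar[of i] deg_le_diff[OF deg_le_one deg_le_mvar[of i]]]
  by (simp add: numeral_2_eq_2)

lemma qmodule_scaled_gbox:
  assumes "i < n" "2 \<le> r" "c \<ge> 0"
  shows "mconst c * gbox i \<in> qmodule n r gbox"
proof -
  let ?s = "\<lambda>l. if l = i then mconst c else 0"
  have "(\<Sum>l<n. ?s l * gbox l) = (\<Sum>l<n. if l = i then mconst c * gbox l else 0)"
    by (rule sum.cong) simp_all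
  then have "mconst c * gbox i = 0 + (\<Sum>l<n. ?s l * gbox l)"
    using assms(1) by simp
  moreover have "deg_le r (mconst c * gbox l)" for l
    using deg_le_mono[OF _ deg_le_mult[OF deg_le_mconst[of 0 c] deg_le_gbox[of l]]] assms(2) by simp
  then have "\<forall>l<n. sos n (?s l) \<and> deg_le r (?s l * gbox l)"
    using sos_mconst[OF assms(3)] by simp
  ultimately show ?thesis
    unfolding qmodule_iff by (intro exI[of _ 0] exI[of _ ?s]) simp
qed

definition monom_poly :: "nat \<Rightarrow> (nat \<Rightarrow> nat) \<Rightarrow> mpoly" where
  "monom_poly n e = (\<Prod>i<n. mvar i ^ e i)"

definition total_exp :: "nat \<Rightarrow> (nat \<Rightarrow> nat) \<Rightarrow> nat" where
  "total_exp n e = (\<Sum>i<n. e i)"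

lemma deg_le_monom_poly: "deg_le (total_exp n e) (monom_poly n e)"
  unfolding monom_poly_def total_exp_def
  by (rule deg_le_prod) (use deg_le_power[OF deg_le_mvar] in simp)

lemma in_vars_monom_poly: "in_vars n (monom_poly n e)"
  unfolding monom_poly_def by (auto intro!: in_vars_prod in_vars_power in_vars_mvar)

lemma monom_poly_add: "monom_poly n (\<lambda>i. a i + b i) = monom_poly n a * monom_poly n b"
  unfolding monom_poly_def by (simp add: power_add prod.distrib)

lemma total_exp_add: "total_exp n (\<lambda>i. a i + b i) = total_exp n a + total_exp n b"
  unfolding total_exp_def by (simp add: sum.distrib)

lemma monom_poly_decrement:
  assumes "i < n" "e i > 0"
  shows "monom_poly n e = mvar i * monom_poly n (e(i := e i - 1))"
proof -
  have "mvar i ^ e i = mvar i * mvar i ^ (e i - 1)"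
    using assms(2) by (metis Suc_diff_1 power_Suc)
  then show ?thesis
    unfolding monom_poly_def using assms(1) by (simp add: prod.remove mult.assoc)
qed

lemma total_exp_decrement:
  assumes "i < n" "e i > 0"
  shows "total_exp n (e(i := e i - 1)) = total_exp n e - 1"
  unfolding total_exp_def using assms by (simp add: sum.remove)

lemma qmodule_one_minus_var_square: "i < n \<Longrightarrow> 1 - mvar i * mvar i \<in> qmodule n 2 gbox"
proof -
  assume i: "i < n"
  have "1 - mvar i * mvar i = (1 - mvar i) * (1 - mvar i) + mconst 2 * gbox i"
    unfolding gbox_def mconst_def by (simp add: algebra_simps)
  moreover have "(1 - mvar i) * (1 - mvar i) \<in> qmodule n 2 gbox"
    using i by (intro qmodule_square[of _ _ 1])
      (auto intro!: in_vars_diff in_vars_mvar deg_le_diff deg_le_mvar[unfolded One_nat_def])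
  moreover have "mconst 2 * gbox i \<in> qmodule n 2 gbox"
    using i by (intro qmodule_scaled_gbox) auto
  ultimately show ?thesis by (simp add: qmodule_add)
qed

text \<open>1 - x^(2h) = (1 - x_i^2) + x_i^2 (1 - x^(2h')), where h' lowers the exponent of x_i by one.\<close>

lemma qmodule_one_minus_monom_square:
  "1 - monom_poly n h * monom_poly n h \<in> qmodule n (2 * total_exp n h) gbox"
proof (induction "total_exp n h" arbitrary: h)
  case 0
  then have "monom_poly n h = 1"
    unfolding total_exp_def monom_poly_def by simp
  then show ?case by simp
next
  case (Suc N)
  then obtain i where i: "i < n" "h i > 0"
    unfolding total_exp_def by (metis lessThan_iff not_gr_zero sum.neutral nat.distinct(1))
  define h' where "h' = h(i := h i - 1)"
  have N: "N = total_exp n h'"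
    unfolding h'_def using total_exp_decrement[of i n h, OF i] Suc(2) by simp
  have h: "monom_poly n h = mvar i * monom_poly n h'"
    unfolding h'_def by (rule monom_poly_decrement[of i n h, OF i])
  have "1 - monom_poly n h * monom_poly n h =
      (1 - mvar i * mvar i) + mvar i * mvar i * (1 - monom_poly n h' * monom_poly n h')"
    unfolding h by (simp add: algebra_simps)
  moreover have "1 - mvar i * mvar i \<in> qmodule n (2 * Suc N) gbox"
    by (rule qmodule_mono[OF _ qmodule_one_minus_var_square[OF i(1)]]) simp
  moreover have "mvar i * mvar i * (1 - monom_poly n h' * monom_poly n h') \<in> qmodule n (2 * N + 2 * 1) gbox"
    using Suc(1)[OF N] N i(1)
    by (intro qmodule_mult_square) (auto intro: in_vars_mvar deg_le_mvar[unfolded One_nat_def])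
  ultimately show ?case
    unfolding Suc(2)[symmetric] by (metis qmodule_add mult_Suc_right add.commute nat_mult_1_right)
qed

lemma exists_sub_exponent:
  "t \<le> total_exp n e \<Longrightarrow> \<exists>e1. (\<forall>i. e1 i \<le> e i) \<and> total_exp n e1 = t"
proof (induction t)
  case 0
  then show ?case by (intro exI[of _ "\<lambda>_. 0"]) (simp add: total_exp_def)
next
  case (Suc t)
  then obtain e1 where e1: "\<forall>i. e1 i \<le> e i" "total_exp n e1 = t" by force
  have "\<exists>i<n. e1 i < e i"
  proof (rule ccontr)
    assume "\<not> ?thesis"
    then have "total_exp n e \<le> total_exp n e1"
      unfolding total_exp_def by (intro sum_mono) (meson lessThan_iff not_le)
    then show False using e1(2) Suc(2) by simp
  qed
  then obtain i where i: "i < n" "e1 i < e i" by blast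
  define e2 where "e2 = e1(i := e1 i + 1)"
  have "total_exp n e2 = Suc t"
    using e1(2) i(1) unfolding total_exp_def e2_def by (simp add: sum.remove)
  moreover have "\<forall>l. e2 l \<le> e l"
    unfolding e2_def using e1(1) i(2) by auto
  ultimately show ?case by blast
qed

text \<open>Split x^e = a b into monomials of degree at most ceil(m/2); then
  1 - a b = ((a - b)^2 + (1 - a^2) + (1 - b^2)) / 2.\<close>

lemma qmodule_one_minus_monom:
  assumes "total_exp n e \<le> m"
  shows "1 - monom_poly n e \<in> qmodule n (2 * ((m + 1) div 2)) gbox"
proof -
  let ?t = "(m + 1) div 2"
  obtain e1 where e1: "\<forall>i. e1 i \<le> e i" "total_exp n e1 = total_exp n e div 2"
    using exists_sub_exponent[of "total_exp n e div 2" n e] by auto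
  define e2 where "e2 i = e i - e1 i" for i
  have e: "e = (\<lambda>i. e1 i + e2 i)"
    unfolding e2_def using e1(1) by (auto simp: fun_eq_iff)
  have t: "total_exp n e1 \<le> ?t" "total_exp n e2 \<le> ?t"
    using total_exp_add[of n e1 e2] e1(2) assms by (auto simp flip: e)
  let ?a = "monom_poly n e1" and ?b = "monom_poly n e2"
  have "mconst (1/2) * 2 = 1"
    using mconst_mult[of "1/2" 2] by (simp add: mconst_def)
  moreover have "monom_poly n e = ?a * ?b"
    by (subst e) (rule monom_poly_add)
  ultimately have "1 - monom_poly n e = mconst (1/2) * ((?a - ?b) * (?a - ?b))
      + mconst (1/2) * (1 - ?a * ?a) + mconst (1/2) * (1 - ?b * ?b)"
    by (simp add: algebra_simps)
  moreover have "(?a - ?b) * (?a - ?b) \<in> qmodule n (2 * ?t) gbox"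
    using t by (intro qmodule_square[of _ _ ?t])
      (auto intro!: in_vars_diff in_vars_monom_poly deg_le_diff deg_le_mono[OF _ deg_le_monom_poly])
  moreover have "1 - ?a * ?a \<in> qmodule n (2 * ?t) gbox" "1 - ?b * ?b \<in> qmodule n (2 * ?t) gbox"
    using t by (auto intro: qmodule_mono[OF _ qmodule_one_minus_monom_square])
  ultimately show ?thesis by (simp add: qmodule_add qmodule_scale)
qed

lemma certificate_const_nonneg:
  assumes "(\<Prod>i<j. mvar i) + mconst c \<in> qmodule j r gbox" "j \<ge> 1"
  shows "c \<ge> 0"
proof -
  have "0 \<le> meval ((\<Prod>i<j. mvar i) + mconst c) (\<lambda>_. 0)"
    by (rule qmodule_eval_nonneg[OF assms(1)])
      (simp add: gbox_def meval_eq_subst_poly real_id.subst_poly_mult real_id.subst_poly_diff)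
  then show ?thesis
    using assms(2) by (simp add: meval_eq_subst_poly real_id.subst_poly_add real_id.subst_poly_prod power_0_left)
qed

lemma in_vars_rename:
  assumes "in_vars s q" "\<And>i. i < s \<Longrightarrow> \<sigma> i < n"
  shows "in_vars n (subst_poly mconst (\<lambda>i. mvar (\<sigma> i)) q)"
  unfolding subst_poly_def monom_eval_def
proof (intro in_vars_sum in_vars_mult in_vars_mconst in_vars_prod in_vars_power in_vars_mvar)
  fix k i assume "k \<in> Poly_Mapping.keys q" "i \<in> Poly_Mapping.keys k"
  then show "\<sigma> i < n" using assms unfolding in_vars_def by auto
qed

lemma deg_le_rename: "deg_le r q \<Longrightarrow> deg_le r (subst_poly mconst (\<lambda>i. mvar (\<sigma> i)) q)"
  unfolding subst_poly_def
proof (intro deg_le_sum)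
  fix k assume "deg_le r q" "k \<in> Poly_Mapping.keys q"
  then have "mon_deg k \<le> r" unfolding deg_le_def by blast
  moreover have "deg_le (0 + mon_deg k) (mconst (Poly_Mapping.lookup q k) * monom_eval (\<lambda>i. mvar (\<sigma> i)) k)"
    unfolding monom_eval_def mon_deg_def
    by (intro deg_le_mult deg_le_mconst deg_le_prod) (use deg_le_power[OF deg_le_mvar] in simp)
  ultimately show "deg_le r (mconst (Poly_Mapping.lookup q k) * monom_eval (\<lambda>i. mvar (\<sigma> i)) k)"
    using deg_le_mono by simp
qed

lemma sos_rename:
  assumes "sos s q" "\<And>i. i < s \<Longrightarrow> \<sigma> i < n"
  shows "sos n (subst_poly mconst (\<lambda>i. mvar (\<sigma> i)) q)"
proof -
  from assms(1) obtain qs where qs: "\<forall>x\<in>set qs. in_vars s x" "q = sum_list (map (\<lambda>q. q * q) qs)"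
    unfolding sos_def by blast
  show ?thesis
    unfolding sos_def qs(2) poly_const.subst_poly_sum_squares
    using qs(1) in_vars_rename[OF _ assms(2)]
    by (intro exI[of _ "map (subst_poly mconst (\<lambda>i. mvar (\<sigma> i))) qs"]) (auto simp: comp_def)
qed

lemma qmodule_rename_product:
  assumes S: "S \<subseteq> {..<n}" "card S = s"
    and cert: "(\<Prod>i<s. mvar i) + mconst c \<in> qmodule s r gbox"
  shows "(\<Prod>i\<in>S. mvar i) + mconst c \<in> qmodule n r gbox"
proof -
  obtain \<sigma> where bij: "bij_betw \<sigma> {..<s} S"
    using ex_bij_betw_nat_finite[OF finite_subset[OF S(1)]] S(2) by (auto simp: lessThan_atLeast0)
  have \<sigma>: "\<sigma> i < n" if "i < s" for i
    using bij that S(1) unfolding bij_betw_def by auto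
  let ?r = "subst_poly mconst (\<lambda>i. mvar (\<sigma> i))"
  from cert obtain s0 sf where A: "sos s s0" "deg_le r s0"
      "\<forall>i<s. sos s (sf i) \<and> deg_le r (sf i * gbox i)"
      "(\<Prod>i<s. mvar i) + mconst c = s0 + (\<Sum>i<s. sf i * gbox i)"
    unfolding qmodule_iff by blast
  define t where "t l = (if l \<in> S then ?r (sf (inv_into {..<s} \<sigma> l)) else 0)" for l
  have rename_gbox: "?r (gbox i) = gbox (\<sigma> i)" for i
    unfolding gbox_def by (simp add: poly_const.subst_poly_mult poly_const.subst_poly_diff)
  have t\<sigma>: "t (\<sigma> i) = ?r (sf i)" if "i < s" for i
    using bij that unfolding t_def bij_betw_def by (auto simp: inv_into_f_f)
  have rename_sum: "?r (\<Sum>i<s. sf i * gbox i) = (\<Sum>l<n. t l * gbox l)"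
  proof -
    have "?r (\<Sum>i<s. sf i * gbox i) = (\<Sum>i<s. t (\<sigma> i) * gbox (\<sigma> i))"
      by (simp add: poly_const.subst_poly_sum poly_const.subst_poly_mult rename_gbox t\<sigma>)
    also have "\<dots> = (\<Sum>l\<in>S. t l * gbox l)"
      by (rule sum.reindex_bij_betw[OF bij])
    also have "\<dots> = (\<Sum>l<n. t l * gbox l)"
      by (rule sum.mono_neutral_left) (use S(1) in \<open>auto simp: t_def\<close>)
    finally show ?thesis .
  qed
  have "(\<Prod>i\<in>S. mvar i) + mconst c = ?r ((\<Prod>i<s. mvar i) + mconst c)"
    by (simp add: poly_const.subst_poly_add poly_const.subst_poly_prod prod.reindex_bij_betw[OF bij])
  also have "\<dots> = ?r s0 + (\<Sum>l<n. t l * gbox l)"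
    unfolding A(4) poly_const.subst_poly_add rename_sum ..
  finally have "(\<Prod>i\<in>S. mvar i) + mconst c = ?r s0 + (\<Sum>l<n. t l * gbox l)" .
  moreover have "sos n (t l) \<and> deg_le r (t l * gbox l)" if "l < n" for l
  proof (cases "l \<in> S")
    case True
    then obtain i where i: "i < s" "l = \<sigma> i"
      using bij unfolding bij_betw_def by auto
    then have "t l * gbox l = ?r (sf i * gbox i)"
      by (simp add: t\<sigma> poly_const.subst_poly_mult rename_gbox)
    then show ?thesis
      using A(3) i \<sigma> by (auto simp: t\<sigma> intro: sos_rename deg_le_rename)
  qed (simp add: t_def)
  ultimately show ?thesis
    unfolding qmodule_iff using sos_rename[OF A(1)] \<sigma> deg_le_rename[OF A(2)] by blast
qed

definition product_cert_consts :: "(nat \<Rightarrow> real) \<Rightarrow> bool" where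
  "product_cert_consts C \<longleftrightarrow>
     (\<forall>j\<ge>1. (\<Prod>i<j. mvar i) + mconst (C j) \<in> qmodule j (2 * ((j + 1) div 2)) gbox)"

lemma product_cert_consts_nonneg: "product_cert_consts C \<Longrightarrow> j \<ge> 1 \<Longrightarrow> C j \<ge> 0"
  unfolding product_cert_consts_def by (blast intro: certificate_const_nonneg)

lemma product_cert_consts_sum_nonneg: "product_cert_consts C \<Longrightarrow> (\<Sum>i=1..m. C i) \<ge> 0"
  by (intro sum_nonneg) (auto intro: product_cert_consts_nonneg)

text \<open>Write x^e = (x^h)^2 x_S, with x_S the product of the variables of odd exponent; then
  x^e + C' = (x^h)^2 (x_S + C_|S|) + C_|S| (1 - (x^h)^2) + (C' - C_|S|).\<close>

lemma qmodule_monom_plus_const: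
  assumes C: "product_cert_consts C" and deg: "total_exp n e \<le> m"
  shows "monom_poly n e + mconst (\<Sum>i=1..m. C i) \<in> qmodule n (2 * ((m + 1) div 2)) gbox"
proof -
  let ?C' = "\<Sum>i=1..m. C i" and ?r = "2 * ((m + 1) div 2)"
  define h where "h i = e i div 2" for i
  define odd_part where "odd_part i = e i mod 2" for i
  define S where "S = {i \<in> {..<n}. odd (e i)}"
  have e: "e = (\<lambda>i. (\<lambda>i. h i + h i) i + odd_part i)"
    unfolding h_def odd_part_def by (auto simp: fun_eq_iff) presburger
  have e_monom: "monom_poly n e = monom_poly n h * monom_poly n h * (\<Prod>i\<in>S. mvar i)"
  proof -
    have "monom_poly n odd_part = (\<Prod>i\<in>S. mvar i)"
      unfolding monom_poly_def S_def
      by (subst prod.inter_filter) (auto simp: odd_part_def odd_iff_mod_2_eq_one intro!: prod.cong)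
    then show ?thesis by (subst e) (simp only: monom_poly_add)
  qed
  have deg_e: "total_exp n e = total_exp n h + total_exp n h + card S"
  proof -
    have "card S = total_exp n odd_part"
      unfolding S_def total_exp_def
      by (subst card_eq_sum, subst sum.inter_filter) (auto simp: odd_part_def odd_iff_mod_2_eq_one intro!: sum.cong)
    then show ?thesis by (subst e) (simp only: total_exp_add)
  qed
  have S: "S \<subseteq> {..<n}" "finite S"
    unfolding S_def by auto
  have h_cert: "1 - monom_poly n h * monom_poly n h \<in> qmodule n ?r gbox"
    by (rule qmodule_mono[OF _ qmodule_one_minus_monom_square]) (use deg deg_e in simp)
  show ?thesis
  proof (cases "S = {}")
    case True
    have "monom_poly n h * monom_poly n h \<in> qmodule n ?r gbox"
      using deg deg_e by (intro qmodule_square[of _ _ "total_exp n h"]) (auto intro: in_vars_monom_poly deg_le_monom_poly)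
    then show ?thesis
      using True e_monom qmodule_mconst[OF product_cert_consts_sum_nonneg[OF C]] by (simp add: qmodule_add)
  next
    case False
    let ?s = "card S"
    have s: "?s \<ge> 1" "?s \<le> m"
      using False S deg deg_e by (auto simp: Suc_le_eq card_gt_0_iff)
    have "(\<Prod>i\<in>S. mvar i) + mconst (C ?s) \<in> qmodule n (2 * ((?s + 1) div 2)) gbox"
      using C s(1) unfolding product_cert_consts_def by (blast intro: qmodule_rename_product[OF S(1)])
    then have "monom_poly n h * monom_poly n h * ((\<Prod>i\<in>S. mvar i) + mconst (C ?s))
        \<in> qmodule n (2 * ((?s + 1) div 2) + 2 * total_exp n h) gbox"
      by (rule qmodule_mult_square[OF _ in_vars_monom_poly deg_le_monom_poly])
    then have "monom_poly n h * monom_poly n h * ((\<Prod>i\<in>S. mvar i) + mconst (C ?s)) \<in> qmodule n ?r gbox"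
      by (rule qmodule_mono[rotated]) (use deg deg_e in presburger)
    moreover have "mconst (C ?s) * (1 - monom_poly n h * monom_poly n h) \<in> qmodule n ?r gbox"
      using product_cert_consts_nonneg[OF C s(1)] h_cert by (rule qmodule_scale)
    moreover have "C ?s \<le> ?C'"
      using s by (intro member_le_sum) (auto intro: product_cert_consts_nonneg[OF C])
    then have "mconst (?C' - C ?s) \<in> qmodule n ?r gbox"
      by (intro qmodule_mconst) simp
    moreover have "monom_poly n e + mconst ?C' = monom_poly n h * monom_poly n h * ((\<Prod>i\<in>S. mvar i) + mconst (C ?s))
        + mconst (C ?s) * (1 - monom_poly n h * monom_poly n h) + mconst (?C' - C ?s)"
      unfolding e_monom mconst_diff by (simp add: algebra_simps)
    ultimately show ?thesis by (simp add: qmodule_add)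
  qed
qed

section \<open>Bernstein approximation of monomials\<close>

definition falling_fact :: "nat \<Rightarrow> nat \<Rightarrow> real" where
  "falling_fact t j = (\<Prod>l<j. real t - real l)"

lemma falling_fact_0 [simp]: "falling_fact t 0 = 1"
  unfolding falling_fact_def by simp

lemma falling_fact_Suc: "falling_fact t (Suc j) = falling_fact t j * (real t - real j)"
  unfolding falling_fact_def by simp

lemma falling_fact_eq_0: "t < j \<Longrightarrow> falling_fact t j = 0"
  unfolding falling_fact_def by (rule prod_zero) auto

lemma falling_fact_nonneg: "falling_fact t j \<ge> 0"
proof (cases "j \<le> t")
  case True
  then show ?thesis unfolding falling_fact_def by (intro prod_nonneg) auto
qed (simp add: falling_fact_eq_0)

lemma falling_fact_mult_fact: "j \<le> t \<Longrightarrow> falling_fact t j * fact (t - j) = fact t"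
proof (induction j)
  case (Suc j)
  then have "fact (t - j) = real (t - j) * fact (t - Suc j)"
    by (metis Suc_diff_le diff_Suc_Suc diff_zero fact_Suc le_less_Suc_eq not_less_eq_eq of_nat_fact)
  then show ?case using Suc by (simp add: falling_fact_Suc of_nat_diff)
qed simp

lemma power_eq_sum_Stirling: "real t ^ a = (\<Sum>j\<le>a. real (Stirling a j) * falling_fact t j)"
proof (induction a)
  case (Suc a)
  have tf: "real t * falling_fact t j = falling_fact t (Suc j) + real j * falling_fact t j" for j
    by (simp add: falling_fact_Suc algebra_simps)
  have "real t ^ Suc a = (\<Sum>j\<le>a. real (Stirling a j) * (real t * falling_fact t j))"
    using Suc by (simp add: sum_distrib_left mult_ac)
  also have "\<dots> = (\<Sum>j\<le>a. real (Stirling a j) * falling_fact t (Suc j))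
      + (\<Sum>j\<le>Suc a. real j * real (Stirling a j) * falling_fact t j)"
    by (simp add: tf distrib_left sum.distrib mult_ac)
  also have "(\<Sum>j\<le>Suc a. real j * real (Stirling a j) * falling_fact t j)
      = (\<Sum>j\<le>a. real (Suc j) * real (Stirling a (Suc j)) * falling_fact t (Suc j))"
    by (subst sum.atMost_Suc_shift) simp
  finally have "real t ^ Suc a = (\<Sum>j\<le>a. real (Stirling (Suc a) (Suc j)) * falling_fact t (Suc j))"
    by (simp add: sum.distrib[symmetric] algebra_simps)
  also have "\<dots> = (\<Sum>j\<le>Suc a. real (Stirling (Suc a) j) * falling_fact t j)"
    by (subst sum.atMost_Suc_shift) simp
  finally show ?case .
qed simp

lemma binomial_falling_fact:
  assumes "j + u \<le> d"
  shows "real (d choose (j + u)) * falling_fact (j + u) j = falling_fact d j * real ((d - j) choose u)"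
proof -
  have a: "falling_fact (j + u) j = fact (j + u) / fact u"
    using falling_fact_mult_fact[of j "j + u"] by (simp add: field_simps)
  have b: "falling_fact d j = fact d / fact (d - j)"
    using falling_fact_mult_fact[of j d] assms by (simp add: field_simps)
  have c: "real (d choose (j + u)) = fact d / (fact (j + u) * fact (d - (j + u)))"
    using binomial_fact assms by blast
  have d: "real ((d - j) choose u) = fact (d - j) / (fact u * fact (d - (j + u)))"
    using binomial_fact[of u "d - j"] assms by (simp add: le_diff_conv2 add.commute)
  show ?thesis unfolding a b c d by (simp add: field_simps)
qed

lemma bernstein_falling_fact:
  fixes X :: mpoly
  shows "(\<Sum>t\<le>d. mconst (real (d choose t) * falling_fact t j) * X ^ t * (1 - X) ^ (d - t))
       = mconst (falling_fact d j) * X ^ j"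
proof (cases "j \<le> d")
  case False
  then show ?thesis by (auto simp: falling_fact_eq_0 intro!: sum.neutral)
next
  case True
  have "(\<Sum>t\<le>d. mconst (real (d choose t) * falling_fact t j) * X ^ t * (1 - X) ^ (d - t))
      = (\<Sum>t\<in>{j..d}. mconst (real (d choose t) * falling_fact t j) * X ^ t * (1 - X) ^ (d - t))"
    by (rule sum.mono_neutral_right) (auto simp: falling_fact_eq_0)
  also have "\<dots> = (\<Sum>u\<le>d - j. mconst (real (d choose (j + u)) * falling_fact (j + u) j)
                                 * X ^ (j + u) * (1 - X) ^ (d - (j + u)))"
  proof -
    have "{j..d} = (\<lambda>u. j + u) ` {..d - j}"
      using True atLeast0AtMost image_add_atLeastAtMost[of j 0 "d - j"] by simp
    then show ?thesis by (simp add: sum.reindex)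
  qed
  also have "\<dots> = (\<Sum>u\<le>d - j. mconst (falling_fact d j) * X ^ j
                                 * (of_nat ((d - j) choose u) * X ^ u * (1 - X) ^ (d - j - u)))"
  proof (rule sum.cong[OF refl])
    fix u assume "u \<in> {..d - j}"
    then have "mconst (real (d choose (j + u)) * falling_fact (j + u) j)
        = mconst (falling_fact d j) * of_nat ((d - j) choose u)"
      using True binomial_falling_fact[of j u d] by (simp add: mconst_mult[symmetric] mconst_of_nat[symmetric])
    then show "mconst (real (d choose (j + u)) * falling_fact (j + u) j) * X ^ (j + u) * (1 - X) ^ (d - (j + u))
        = mconst (falling_fact d j) * X ^ j * (of_nat ((d - j) choose u) * X ^ u * (1 - X) ^ (d - j - u))"
      by (simp add: power_add mult_ac)
  qed
  also have "\<dots> = mconst (falling_fact d j) * X ^ j * (X + (1 - X)) ^ (d - j)"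
    by (subst binomial_ring) (simp add: sum_distrib_left)
  finally show ?thesis by simp
qed

text \<open>bern_weight d a j is the coefficient of X^j in B_d(X^a).\<close>

definition bern_weight :: "nat \<Rightarrow> nat \<Rightarrow> nat \<Rightarrow> real" where
  "bern_weight d a j = real (Stirling a j) * falling_fact d j / real d ^ a"

lemma bernstein_power:
  fixes X :: mpoly
  shows "(\<Sum>t\<le>d. mconst ((real t / real d) ^ a * real (d choose t)) * X ^ t * (1 - X) ^ (d - t))
       = (\<Sum>j\<le>a. mconst (bern_weight d a j) * X ^ j)"
proof -
  have "(\<Sum>t\<le>d. mconst ((real t / real d) ^ a * real (d choose t)) * X ^ t * (1 - X) ^ (d - t))
      = (\<Sum>t\<le>d. \<Sum>j\<le>a. mconst (real (Stirling a j) / real d ^ a)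
            * (mconst (real (d choose t) * falling_fact t j) * X ^ t * (1 - X) ^ (d - t)))"
  proof (rule sum.cong[OF refl])
    fix t
    have node: "(real t / real d) ^ a * real (d choose t) =
        (\<Sum>j\<le>a. real (Stirling a j) / real d ^ a * (real (d choose t) * falling_fact t j))"
      unfolding power_divide power_eq_sum_Stirling[of t a] sum_divide_distrib sum_distrib_right
      by (rule sum.cong) auto
    show "mconst ((real t / real d) ^ a * real (d choose t)) * X ^ t * (1 - X) ^ (d - t) =
        (\<Sum>j\<le>a. mconst (real (Stirling a j) / real d ^ a)
            * (mconst (real (d choose t) * falling_fact t j) * X ^ t * (1 - X) ^ (d - t)))"
      unfolding node mconst_sum sum_distrib_right
      by (rule sum.cong[OF refl]) (simp only: mconst_mult[symmetric] mult.assoc)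
  qed
  also have "\<dots> = (\<Sum>j\<le>a. mconst (real (Stirling a j) / real d ^ a)
            * (\<Sum>t\<le>d. mconst (real (d choose t) * falling_fact t j) * X ^ t * (1 - X) ^ (d - t)))"
    by (subst sum.swap) (simp add: sum_distrib_left)
  also have "\<dots> = (\<Sum>j\<le>a. mconst (bern_weight d a j) * X ^ j)"
    by (simp add: bernstein_falling_fact bern_weight_def mult.assoc[symmetric] mconst_mult)
  finally show ?thesis .
qed

lemma bern_weight_nonneg: "bern_weight d a j \<ge> 0"
  unfolding bern_weight_def by (simp add: falling_fact_nonneg)

lemma sum_bern_weight: "d \<ge> 1 \<Longrightarrow> (\<Sum>j\<le>a. bern_weight d a j) = 1"
  unfolding bern_weight_def sum_divide_distrib[symmetric] power_eq_sum_Stirling[symmetric] by simp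

lemma bern_weight_diag: "bern_weight d a a = falling_fact d a / real d ^ a"
  unfolding bern_weight_def by simp

definition mbern_weight :: "nat \<Rightarrow> nat \<Rightarrow> (nat \<Rightarrow> nat) \<Rightarrow> (nat \<Rightarrow> nat) \<Rightarrow> real" where
  "mbern_weight n d e J = (\<Prod>i<n. bern_weight d (e i) (J i))"

definition bern_monom :: "nat \<Rightarrow> nat \<Rightarrow> (nat \<Rightarrow> nat) \<Rightarrow> mpoly" where
  "bern_monom n d e =
     (\<Sum>J\<in>PiE {..<n} (\<lambda>i. {..e i}). mconst (mbern_weight n d e J) * monom_poly n J)"

lemma bernstein_monom:
  assumes k: "Poly_Mapping.keys k \<subseteq> {..<n}"
  shows "(\<Sum>\<kappa>\<in>PiE {..<n} (\<lambda>_. {..d}).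
      mconst (monom_eval (\<lambda>i. if i < n then real (\<kappa> i) / real d else 0) k) *
      (\<Prod>i<n. mconst (real (d choose \<kappa> i)) * mvar i ^ \<kappa> i * (1 - mvar i) ^ (d - \<kappa> i)))
   = bern_monom n d (Poly_Mapping.lookup k)"
proof -
  define e where "e = Poly_Mapping.lookup k"
  define F where "F i t = mconst ((real t / real d) ^ e i * real (d choose t)) * mvar i ^ t * (1 - mvar i) ^ (d - t)"
    for i t
  have factor: "mconst (monom_eval (\<lambda>i. if i < n then real (\<kappa> i) / real d else 0) k) *
      (\<Prod>i<n. mconst (real (d choose \<kappa> i)) * mvar i ^ \<kappa> i * (1 - mvar i) ^ (d - \<kappa> i))
     = (\<Prod>i<n. F i (\<kappa> i))" for \<kappa>
  proof -
    have "monom_eval (\<lambda>i. if i < n then real (\<kappa> i) / real d else 0) k = (\<Prod>i<n. (real (\<kappa> i) / real d) ^ e i)"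
      unfolding e_def by (subst monom_eval_superset[OF _ k]) auto
    then show ?thesis
      unfolding F_def by (simp add: mconst_prod prod.distrib[symmetric] mconst_mult[symmetric] mult.assoc)
  qed
  have "(\<Sum>\<kappa>\<in>PiE {..<n} (\<lambda>_. {..d}). \<Prod>i<n. F i (\<kappa> i)) = (\<Prod>i<n. \<Sum>t\<le>d. F i t)"
    by (rule prod_sum_PiE[symmetric]) auto
  also have "\<dots> = (\<Prod>i<n. \<Sum>j\<le>e i. mconst (bern_weight d (e i) j) * mvar i ^ j)"
    unfolding F_def by (simp add: bernstein_power)
  also have "\<dots> = (\<Sum>J\<in>PiE {..<n} (\<lambda>i. {..e i}). \<Prod>i<n. mconst (bern_weight d (e i) (J i)) * mvar i ^ J i)"
    by (rule prod_sum_PiE) auto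
  also have "\<dots> = (\<Sum>J\<in>PiE {..<n} (\<lambda>i. {..e i}). mconst (mbern_weight n d e J) * monom_poly n J)"
    unfolding monom_poly_def mbern_weight_def by (simp add: mconst_prod prod.distrib)
  finally show ?thesis unfolding factor bern_monom_def e_def .
qed

lemma sum_mbern_weight: "d \<ge> 1 \<Longrightarrow> (\<Sum>J\<in>PiE {..<n} (\<lambda>i. {..e i}). mbern_weight n d e J) = 1"
  unfolding mbern_weight_def by (subst prod_sum_PiE[symmetric]) (auto simp: sum_bern_weight)

lemma real_choose_two: "real (a choose 2) = real a * (real a - 1) / 2"
proof (induction a)
  case (Suc a)
  have "Suc a choose 2 = (a choose 2) + a"
    using binomial_Suc_Suc[of a 1] by (simp add: numeral_2_eq_2)
  then show ?case using Suc by (simp add: field_simps)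
qed simp

lemma sum_lessThan_eq_choose_two: "(\<Sum>l<a. real l) = real (a choose 2)"
  by (induction a) (auto simp: real_choose_two field_simps)

lemma sum_choose_two_le: "finite I \<Longrightarrow> (\<Sum>i\<in>I. real (e i choose 2)) \<le> real ((\<Sum>i\<in>I. e i) choose 2)"
proof (induction I rule: finite_induct)
  case (insert a F)
  have "real (e a choose 2) + real ((\<Sum>i\<in>F. e i) choose 2) \<le> real ((e a + (\<Sum>i\<in>F. e i)) choose 2)"
    unfolding real_choose_two by (simp add: field_simps sum_nonneg)
  then show ?case using insert by simp
qed simp

lemma one_minus_sum_le_prod:
  fixes x u :: "'a \<Rightarrow> real"
  assumes "finite I"
    and "\<And>i. i \<in> I \<Longrightarrow> 0 \<le> x i \<and> x i \<le> 1" "\<And>i. i \<in> I \<Longrightarrow> 1 - u i \<le> x i"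
  shows "1 - sum u I \<le> prod x I"
  using assms
proof (induction I rule: finite_induct)
  case (insert a F)
  then have "1 - sum u F \<le> prod x F" "prod x F \<le> 1" "0 \<le> x a" "x a \<le> 1" "1 - u a \<le> x a"
    by (auto intro: prod_le_1)
  moreover from this have "x a * (1 - prod x F) \<le> 1 - prod x F"
    by (intro mult_left_le_one_le) auto
  ultimately show ?case using insert(1,2) by (simp add: algebra_simps)
qed simp

lemma falling_fact_ratio_bounds:
  assumes d: "d \<ge> 1"
  shows "0 \<le> falling_fact d a / real d ^ a" "falling_fact d a / real d ^ a \<le> 1"
    "1 - real (a choose 2) / real d \<le> falling_fact d a / real d ^ a"
proof -
  show "0 \<le> falling_fact d a / real d ^ a"
    by (simp add: falling_fact_nonneg)
  have ratio: "falling_fact d a / real d ^ a = (\<Prod>l<a. 1 - real l / real d)" if "a \<le> d"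
  proof -
    have "falling_fact d a / real d ^ a = (\<Prod>l<a. (real d - real l) / real d)"
      unfolding falling_fact_def prod_dividef by simp
    also have "\<dots> = (\<Prod>l<a. 1 - real l / real d)"
      using d by (intro prod.cong) (auto simp: field_simps)
    finally show ?thesis .
  qed
  show "falling_fact d a / real d ^ a \<le> 1"
    by (cases "a \<le> d") (use d ratio in \<open>auto simp: falling_fact_eq_0 intro!: prod_le_1\<close>)
  show "1 - real (a choose 2) / real d \<le> falling_fact d a / real d ^ a"
  proof (cases "a \<le> d")
    case True
    have "1 - (\<Sum>l<a. real l / real d) \<le> (\<Prod>l<a. 1 - real l / real d)"
      by (rule one_minus_sum_le_prod) (use True d in auto)
    then show ?thesis
      using ratio[OF True] sum_lessThan_eq_choose_two[of a] by (simp add: sum_divide_distrib[symmetric])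
  next
    case False
    then have "real d * 2 \<le> real a * (real a - 1)"
      using mult_mono[of "real d" "real a - 1" 2 "real a"] d by (simp add: mult.commute)
    then have "real d \<le> real (a choose 2)"
      unfolding real_choose_two by simp
    then show ?thesis using False d by (simp add: falling_fact_eq_0)
  qed
qed

lemma one_minus_mbern_weight_diag:
  assumes "d \<ge> 1"
  shows "1 - mbern_weight n d e e \<le> real (total_exp n e choose 2) / real d"
proof -
  have "1 - (\<Sum>i<n. real (e i choose 2) / real d) \<le> mbern_weight n d e e"
    unfolding mbern_weight_def
    by (rule one_minus_sum_le_prod) (use falling_fact_ratio_bounds[OF assms] in \<open>auto simp: bern_weight_diag\<close>)
  moreover have "(\<Sum>i<n. real (e i choose 2) / real d) \<le> real (total_exp n e choose 2) / real d"
    unfolding sum_divide_distrib[symmetric] total_exp_def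
    by (intro divide_right_mono sum_choose_two_le) auto
  ultimately show ?thesis by linarith
qed

lemma qmodule_scaled_diff:
  assumes "a + mconst K \<in> qmodule n r g" "1 - a \<in> qmodule n r g"
    and "b + mconst K \<in> qmodule n r g" "1 - b \<in> qmodule n r g"
  shows "mconst c * (a - b) + mconst (\<bar>c\<bar> * (1 + K)) \<in> qmodule n r g"
proof (cases "c \<ge> 0")
  case True
  have "mconst c * (a - b) + mconst (\<bar>c\<bar> * (1 + K)) = mconst c * (a + mconst K) + mconst c * (1 - b)"
    using True by (simp add: mconst_mult[symmetric] mconst_add algebra_simps)
  then show ?thesis
    using True assms by (simp add: qmodule_add qmodule_scale)
next
  case False
  have "mconst (\<bar>c\<bar> * (1 + K)) = mconst (- c - c * K)"
    using False by (simp add: algebra_simps)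
  also have "\<dots> = - mconst c - mconst c * mconst K"
    by (simp add: mconst_diff mconst_uminus mconst_mult)
  finally have "mconst c * (a - b) + mconst (\<bar>c\<bar> * (1 + K)) = mconst (- c) * (b + mconst K) + mconst (- c) * (1 - a)"
    by (simp add: mconst_uminus algebra_simps)
  then show ?thesis
    using False assms by (simp add: qmodule_add qmodule_scale)
qed

text \<open>With w_E0 = 1 - W: x^E0 - sum_J w_J x^J = sum_{J ~= E0} w_J (x^E0 - x^J).\<close>

lemma qmodule_monom_minus_convex_comb:
  assumes C: "product_cert_consts C"
    and A: "finite A" "E0 \<in> A" and w: "\<And>J. J \<in> A \<Longrightarrow> w J \<ge> 0" "(\<Sum>J\<in>A. w J) = 1"
    and deg: "\<And>J. J \<in> A \<Longrightarrow> total_exp n J \<le> m"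
  shows "mconst c * (monom_poly n E0 - (\<Sum>J\<in>A. mconst (w J) * monom_poly n J))
           + mconst (\<bar>c\<bar> * (1 - w E0) * (1 + (\<Sum>i=1..m. C i)))
         \<in> qmodule n (2 * ((m + 1) div 2)) gbox"
proof -
  let ?C' = "\<Sum>i=1..m. C i" and ?A = "A - {E0}"
  let ?diff = "\<lambda>J. mconst c * (monom_poly n E0 - monom_poly n J) + mconst (\<bar>c\<bar> * (1 + ?C'))"
  define W where "W = (\<Sum>J\<in>?A. w J)"
  have w_E0: "w E0 = 1 - W"
    unfolding W_def using w(2) sum.remove[OF A, of w] by simp
  have "(\<Sum>J\<in>?A. mconst (w J) * ?diff J)
      = mconst c * (\<Sum>J\<in>?A. mconst (w J) * (monom_poly n E0 - monom_poly n J))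
        + mconst (\<bar>c\<bar> * (1 + ?C')) * mconst W"
    unfolding W_def mconst_sum distrib_left sum.distrib sum_distrib_left sum_distrib_right
    by (simp add: mult.left_commute mult.commute)
  also have "(\<Sum>J\<in>?A. mconst (w J) * (monom_poly n E0 - monom_poly n J))
      = monom_poly n E0 - (\<Sum>J\<in>A. mconst (w J) * monom_poly n J)"
    unfolding sum.remove[OF A, of "\<lambda>J. mconst (w J) * monom_poly n J"] w_E0 W_def
    by (simp add: mconst_diff mconst_sum right_diff_distrib sum_subtractf sum_distrib_left algebra_simps)
  finally have "mconst c * (monom_poly n E0 - (\<Sum>J\<in>A. mconst (w J) * monom_poly n J))
        + mconst (\<bar>c\<bar> * (1 - w E0) * (1 + ?C')) = (\<Sum>J\<in>?A. mconst (w J) * ?diff J)"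
    unfolding w_E0 by (simp add: mconst_mult mult_ac)
  moreover have "?diff J \<in> qmodule n (2 * ((m + 1) div 2)) gbox" if "J \<in> A" for J
    using A(2) that deg
    by (intro qmodule_scaled_diff qmodule_monom_plus_const[OF C] qmodule_one_minus_monom) auto
  ultimately show ?thesis
    using w(1) by (auto intro!: qmodule_sum qmodule_scale)
qed

section \<open>Summing over the monomials\<close>

definition exp_fact :: "nat \<Rightarrow> (nat \<Rightarrow> nat) \<Rightarrow> real" where
  "exp_fact n e = (\<Prod>i<n. fact (e i))"

lemma exp_fact_pos: "exp_fact n e > 0"
  unfolding exp_fact_def by (intro prod_pos) auto

lemma exp_fact_decrement:
  assumes "i < n" "e i > 0"
  shows "exp_fact n e = real (e i) * exp_fact n (e(i := e i - 1))"
proof -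
  have "fact (e i) = real (e i) * fact (e i - 1)"
    using assms(2) by (metis Suc_diff_1 fact_Suc of_nat_Suc)
  then show ?thesis
    unfolding exp_fact_def using assms(1) by (simp add: prod.remove)
qed

text \<open>Induction on j via j!/e! = sum_{i: e_i > 0} (j-1)!/(e - delta_i)!, where e \<mapsto> e - delta_i is
  injective.\<close>

lemma sum_multinomial_le:
  "finite E \<Longrightarrow> (\<And>e. e \<in> E \<Longrightarrow> (\<forall>i\<ge>n. e i = 0) \<and> total_exp n e = j) \<Longrightarrow>
     (\<Sum>e\<in>E. fact j / exp_fact n e) \<le> real n ^ j"
proof (induction j arbitrary: E)
  case 0
  have "E \<subseteq> {\<lambda>_. 0}"
  proof
    fix e assume "e \<in> E"
    then have "\<forall>i\<ge>n. e i = 0" "\<forall>i<n. e i = 0"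
      using 0 by (auto simp: total_exp_def)
    then show "e \<in> {\<lambda>_. 0}" by (auto simp: fun_eq_iff not_le[symmetric])
  qed
  then have "card E \<le> 1" and "\<forall>e\<in>E. fact 0 / exp_fact n e = 1"
    using card_mono[of "{\<lambda>_. 0}" E] by (auto simp: exp_fact_def)
  then show ?case by simp
next
  case (Suc j)
  define dec where "dec i e = e(i := e i - 1)" for i and e :: "nat \<Rightarrow> nat"
  define E\<^sub>i where "E\<^sub>i i = {e \<in> E. e i > 0}" for i
  have split: "fact (Suc j) / exp_fact n e = (\<Sum>i<n. if e i > 0 then fact j / exp_fact n (dec i e) else 0)"
    if "e \<in> E" for e
  proof -
    have "(\<Sum>i<n. if e i > 0 then fact j / exp_fact n (dec i e) else 0) = (\<Sum>i<n. real (e i) * (fact j / exp_fact n e))"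
    proof (rule sum.cong[OF refl])
      fix i assume "i \<in> {..<n}"
      then show "(if e i > 0 then fact j / exp_fact n (dec i e) else 0) = real (e i) * (fact j / exp_fact n e)"
        using exp_fact_decrement[of i n e] exp_fact_pos[of n "dec i e"] by (simp add: dec_def field_simps)
    qed
    also have "\<dots> = real (total_exp n e) * (fact j / exp_fact n e)"
      unfolding total_exp_def of_nat_sum sum_distrib_right by simp
    also have "\<dots> = fact (Suc j) / exp_fact n e"
      using Suc.prems(2)[OF that] by simp
    finally show ?thesis by simp
  qed
  have "(\<Sum>e\<in>E. fact (Suc j) / exp_fact n e) = (\<Sum>i<n. \<Sum>e\<in>E. if e i > 0 then fact j / exp_fact n (dec i e) else 0)"
    using split by (simp add: sum.swap[of _ "{..<n}"])
  also have "\<dots> = (\<Sum>i<n. \<Sum>e\<in>E\<^sub>i i. fact j / exp_fact n (dec i e))"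
    unfolding E\<^sub>i_def by (simp add: sum.inter_filter Suc.prems(1))
  also have "\<dots> \<le> (\<Sum>i<n. real n ^ j)"
  proof (rule sum_mono)
    fix i assume i: "i \<in> {..<n}"
    have "inj_on (dec i) (E\<^sub>i i)"
    proof (rule inj_onI)
      fix x y assume xy: "x \<in> E\<^sub>i i" "y \<in> E\<^sub>i i" "dec i x = dec i y"
      have "x l = y l" for l
        using fun_cong[OF xy(3), of l] xy(1,2) by (cases "l = i") (auto simp: dec_def E\<^sub>i_def)
      then show "x = y" by auto
    qed
    then have "(\<Sum>e\<in>E\<^sub>i i. fact j / exp_fact n (dec i e)) = (\<Sum>e\<in>dec i ` E\<^sub>i i. fact j / exp_fact n e)"
      by (simp add: sum.reindex o_def)
    also have "\<dots> \<le> real n ^ j"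
    proof (rule Suc.IH)
      show "finite (dec i ` E\<^sub>i i)" unfolding E\<^sub>i_def using Suc.prems(1) by simp
      fix e' assume "e' \<in> dec i ` E\<^sub>i i"
      then obtain e where e: "e \<in> E" "e i > 0" "e' = dec i e" unfolding E\<^sub>i_def by auto
      then show "(\<forall>l\<ge>n. e' l = 0) \<and> total_exp n e' = j"
        using Suc.prems(2)[OF e(1)] total_exp_decrement[of i n e] i by (auto simp: dec_def)
    qed
    finally show "(\<Sum>e\<in>E\<^sub>i i. fact j / exp_fact n (dec i e)) \<le> real n ^ j" .
  qed
  finally show ?case by simp
qed

lemma mon_deg_eq_total_exp: "Poly_Mapping.keys k \<subseteq> {..<n} \<Longrightarrow> mon_deg k = total_exp n (Poly_Mapping.lookup k)"
  unfolding total_exp_def by (rule mon_deg_superset) auto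

lemma mon_fact_eq_exp_fact: "Poly_Mapping.keys k \<subseteq> {..<n} \<Longrightarrow> mon_fact k = exp_fact n (Poly_Mapping.lookup k)"
  unfolding mon_fact_def exp_fact_def by (rule prod.mono_neutral_left) (auto simp: in_keys_iff)

lemma sum_choose_two_multinomial_le:
  assumes K: "finite K" "\<And>k. k \<in> K \<Longrightarrow> Poly_Mapping.keys k \<subseteq> {..<n} \<and> mon_deg k \<le> m"
    and n: "n \<ge> 1"
  shows "(\<Sum>k\<in>K. real (mon_deg k choose 2) * (fact (mon_deg k) / mon_fact k))
           \<le> real ((m + 1) choose 3) * real n ^ m"
proof -
  let ?K = "\<lambda>j. {k\<in>K. mon_deg k = j}"
  have multinomial: "(\<Sum>k\<in>?K j. fact j / mon_fact k) \<le> real n ^ m" if "j \<le> m" for j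
  proof -
    have inj: "inj_on Poly_Mapping.lookup (?K j)"
      by (rule inj_onI) (simp add: poly_mapping_eqI)
    have "(\<Sum>k\<in>?K j. fact j / mon_fact k) = (\<Sum>k\<in>?K j. fact j / exp_fact n (Poly_Mapping.lookup k))"
      using K(2) by (intro sum.cong) (auto simp: mon_fact_eq_exp_fact)
    also have "\<dots> = (\<Sum>e\<in>Poly_Mapping.lookup ` ?K j. fact j / exp_fact n e)"
      by (simp add: sum.reindex[OF inj])
    also have "\<dots> \<le> real n ^ j"
    proof (rule sum_multinomial_le)
      fix e assume "e \<in> Poly_Mapping.lookup ` ?K j"
      then obtain k where "k \<in> K" "mon_deg k = j" "e = Poly_Mapping.lookup k" by auto
      then show "(\<forall>i\<ge>n. e i = 0) \<and> total_exp n e = j"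
        using K(2)[of k] mon_deg_eq_total_exp[of k n] by (auto simp: in_keys_iff)
    qed (use K(1) in simp)
    also have "\<dots> \<le> real n ^ m"
      using that n by (intro power_increasing) auto
    finally show ?thesis .
  qed
  have "(\<Sum>k\<in>K. real (mon_deg k choose 2) * (fact (mon_deg k) / mon_fact k))
      = (\<Sum>j\<le>m. real (j choose 2) * (\<Sum>k\<in>?K j. fact j / mon_fact k))"
    using K by (subst sum.group[symmetric, of _ "{..m}" mon_deg]) (auto simp: sum_distrib_left)
  also have "\<dots> \<le> (\<Sum>j\<le>m. real (j choose 2) * real n ^ m)"
    using multinomial by (intro sum_mono mult_left_mono) auto
  also have "\<dots> = real ((m + 1) choose 3) * real n ^ m"
    using sum_choose_upper[of 2 m] by (simp add: sum_distrib_right[symmetric] numeral_3_eq_3 flip: of_nat_sum)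
  finally show ?thesis .
qed

lemma Lnorm_nonneg: "0 \<le> Lnorm p"
  unfolding Lnorm_def by (rule Max_ge) auto

lemma abs_coeff_le_Lnorm:
  assumes "k \<in> Poly_Mapping.keys p"
  shows "\<bar>Poly_Mapping.lookup p k\<bar> \<le> Lnorm p * fact (mon_deg k) / mon_fact k"
proof -
  have "\<bar>Poly_Mapping.lookup p k\<bar> * mon_fact k / fact (mon_deg k) \<le> Lnorm p"
    unfolding Lnorm_def by (rule Max_ge) (use assms in auto)
  moreover have "mon_fact k > 0"
    unfolding mon_fact_def by (intro prod_pos) auto
  ultimately show ?thesis by (simp add: field_simps)
qed

lemma poly_eq_sum_monom_poly:
  assumes "in_vars n p"
  shows "p = (\<Sum>k\<in>Poly_Mapping.keys p. mconst (Poly_Mapping.lookup p k) * monom_poly n (Poly_Mapping.lookup k))"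
proof -
  have "monom_eval mvar k = monom_poly n (Poly_Mapping.lookup k)" if "k \<in> Poly_Mapping.keys p" for k
    unfolding monom_poly_def using assms that unfolding in_vars_def by (intro monom_eval_superset) auto
  then show ?thesis
    using subst_poly_mvar_id[of p] unfolding subst_poly_def by (metis (no_types, lifting) sum.cong)
qed

lemma bernstein_eq_sum_bern_monom:
  assumes "in_vars n p"
  shows "bernstein n d p =
    (\<Sum>k\<in>Poly_Mapping.keys p. mconst (Poly_Mapping.lookup p k) * bern_monom n d (Poly_Mapping.lookup k))"
proof -
  define y where "y \<kappa> i = (if i < n then real (\<kappa> i) / real d else 0)" for \<kappa> :: "nat \<Rightarrow> nat" and i
  define B where "B \<kappa> = (\<Prod>i<n. mconst (real (d choose \<kappa> i)) * mvar i ^ \<kappa> i * (1 - mvar i) ^ (d - \<kappa> i))"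
    for \<kappa>
  have "bernstein n d p = (\<Sum>\<kappa>\<in>PiE {..<n} (\<lambda>_. {..d}). \<Sum>k\<in>Poly_Mapping.keys p.
      mconst (Poly_Mapping.lookup p k) * (mconst (monom_eval (y \<kappa>) k) * B \<kappa>))"
    unfolding bernstein_def meval_eq_subst_poly subst_poly_def y_def B_def
    by (simp add: mconst_sum sum_distrib_right mconst_mult[symmetric] mult.assoc)
  also have "\<dots> = (\<Sum>k\<in>Poly_Mapping.keys p. mconst (Poly_Mapping.lookup p k) *
      (\<Sum>\<kappa>\<in>PiE {..<n} (\<lambda>_. {..d}). mconst (monom_eval (y \<kappa>) k) * B \<kappa>))"
    by (subst sum.swap) (simp add: sum_distrib_left)
  also have "\<dots> = (\<Sum>k\<in>Poly_Mapping.keys p. mconst (Poly_Mapping.lookup p k) * bern_monom n d (Poly_Mapping.lookup k))"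
    using assms unfolding in_vars_def y_def B_def by (intro sum.cong refl) (simp add: bernstein_monom)
  finally show ?thesis .
qed

lemma qmodule_bernstein_error_monom:
  assumes C: "product_cert_consts C" and d: "d \<ge> 1" and deg: "total_exp n e \<le> m"
  shows "mconst c * (monom_poly n e - bern_monom n d e)
           + mconst (\<bar>c\<bar> * (1 - mbern_weight n d e e) * (1 + (\<Sum>i=1..m. C i)))
         \<in> qmodule n (2 * ((m + 1) div 2)) gbox"
proof -
  let ?A = "PiE {..<n} (\<lambda>i. {..e i})" and ?e = "restrict e {..<n}"
  have "finite ?A" "?e \<in> ?A"
    by (auto intro: finite_PiE)
  moreover have "mbern_weight n d e J \<ge> 0" for J
    unfolding mbern_weight_def by (intro prod_nonneg) (auto intro: bern_weight_nonneg)
  moreover have "total_exp n J \<le> m" if "J \<in> ?A" for J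
  proof -
    have "total_exp n J \<le> total_exp n e"
      unfolding total_exp_def using that by (intro sum_mono) (auto simp: PiE_iff)
    then show ?thesis using deg by simp
  qed
  ultimately have "mconst c * (monom_poly n ?e - bern_monom n d e)
      + mconst (\<bar>c\<bar> * (1 - mbern_weight n d e ?e) * (1 + (\<Sum>i=1..m. C i)))
      \<in> qmodule n (2 * ((m + 1) div 2)) gbox"
    unfolding bern_monom_def by (intro qmodule_monom_minus_convex_comb[OF C] sum_mbern_weight[OF d])
  moreover have "monom_poly n ?e = monom_poly n e" "mbern_weight n d e ?e = mbern_weight n d e e"
    unfolding monom_poly_def mbern_weight_def by simp_all
  ultimately show ?thesis by simp
qed

lemma bernstein_error_const_le:
  assumes d: "d \<ge> 1" and K: "K \<ge> 0" and k: "k \<in> Poly_Mapping.keys p" "Poly_Mapping.keys k \<subseteq> {..<n}"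
  shows "\<bar>Poly_Mapping.lookup p k\<bar> * (1 - mbern_weight n d (Poly_Mapping.lookup k) (Poly_Mapping.lookup k)) * K
           \<le> K * (Lnorm p / real d) * (real (mon_deg k choose 2) * (fact (mon_deg k) / mon_fact k))"
proof -
  let ?c = "\<bar>Poly_Mapping.lookup p k\<bar>"
  have "?c * (1 - mbern_weight n d (Poly_Mapping.lookup k) (Poly_Mapping.lookup k))
      \<le> ?c * (real (mon_deg k choose 2) / real d)"
    using one_minus_mbern_weight_diag[OF d] mon_deg_eq_total_exp[OF k(2)] by (intro mult_left_mono) auto
  also have "\<dots> \<le> (Lnorm p * fact (mon_deg k) / mon_fact k) * (real (mon_deg k choose 2) / real d)"
    using abs_coeff_le_Lnorm[OF k(1)] by (intro mult_right_mono) auto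
  finally have "?c * (1 - mbern_weight n d (Poly_Mapping.lookup k) (Poly_Mapping.lookup k)) * K
      \<le> (Lnorm p * fact (mon_deg k) / mon_fact k) * (real (mon_deg k choose 2) / real d) * K"
    using K by (rule mult_right_mono)
  then show ?thesis by (simp add: mult_ac)
qed

lemma sum_bernstein_error_const_le:
  assumes d: "d \<ge> 1" and K: "K \<ge> 0" and n: "n \<ge> 1" and p: "in_vars n p" "mdegree p \<le> m"
  shows "(\<Sum>k\<in>Poly_Mapping.keys p.
            \<bar>Poly_Mapping.lookup p k\<bar> * (1 - mbern_weight n d (Poly_Mapping.lookup k) (Poly_Mapping.lookup k)) * K)
         \<le> K * (Lnorm p / real d) * real ((m + 1) choose 3) * real n ^ m"
proof -
  have keys: "Poly_Mapping.keys k \<subseteq> {..<n} \<and> mon_deg k \<le> m" if "k \<in> Poly_Mapping.keys p" for k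
    using p that unfolding in_vars_def mdegree_le_iff deg_le_def by blast
  have "(\<Sum>k\<in>Poly_Mapping.keys p.
            \<bar>Poly_Mapping.lookup p k\<bar> * (1 - mbern_weight n d (Poly_Mapping.lookup k) (Poly_Mapping.lookup k)) * K)
      \<le> (\<Sum>k\<in>Poly_Mapping.keys p. K * (Lnorm p / real d) * (real (mon_deg k choose 2) * (fact (mon_deg k) / mon_fact k)))"
    using keys by (intro sum_mono bernstein_error_const_le[OF d K]) blast+
  also have "\<dots> = K * (Lnorm p / real d) * (\<Sum>k\<in>Poly_Mapping.keys p. real (mon_deg k choose 2) * (fact (mon_deg k) / mon_fact k))"
    by (simp add: sum_distrib_left)
  also have "\<dots> \<le> K * (Lnorm p / real d) * (real ((m + 1) choose 3) * real n ^ m)"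
    using keys K Lnorm_nonneg[of p]
    by (intro mult_left_mono sum_choose_two_multinomial_le[OF finite_keys _ n]) auto
  finally show ?thesis by (simp add: mult.assoc)
qed

lemma bernstein_error_eq_sum:
  assumes "in_vars n p"
  shows "p - bernstein n d p = (\<Sum>k\<in>Poly_Mapping.keys p.
           mconst (Poly_Mapping.lookup p k) * (monom_poly n (Poly_Mapping.lookup k) - bern_monom n d (Poly_Mapping.lookup k)))"
  by (subst (1) poly_eq_sum_monom_poly[OF assms], subst bernstein_eq_sum_bern_monom[OF assms])
    (simp add: sum_subtractf right_diff_distrib)

lemma product_cert_consts_error_bound_mono:
  assumes "product_cert_consts C"
  shows "(1 + (\<Sum>i=1..m. C i)) * (Lnorm p / real d) * real ((m + 1) choose 3) * real n ^ m
         \<le> (1 + (\<Sum>i=1..m. C i) + C m) * (Lnorm p / real d) * real ((m + 1) choose 3) * real n ^ m"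
proof -
  let ?X = "Lnorm p / real d * real ((m + 1) choose 3) * real n ^ m"
  have "0 \<le> C m * ?X"
    using product_cert_consts_nonneg[OF assms, of m] Lnorm_nonneg[of p]
    by (cases "m = 0") (auto simp: binomial_eq_0)
  then have "(1 + (\<Sum>i=1..m. C i)) * ?X \<le> (1 + (\<Sum>i=1..m. C i) + C m) * ?X"
    unfolding distrib_right by linarith
  then show ?thesis by (simp only: mult.assoc)
qed

theorem theorem6:
  fixes C :: "nat \<Rightarrow> real" and n m d :: nat and p :: mpoly
  assumes C1: "C 1 = 0"
    and C_le: "\<And>j. j \<ge> 1 \<Longrightarrow> C j \<le> 1"
    and C_cert: "\<And>j. j \<ge> 1 \<Longrightarrow>
        (\<Prod>i<j. mvar i) + mconst (C j) \<in> qmodule j (2 * ((j + 1) div 2)) gbox"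
    and n_pos: "n \<ge> 1"
    and p_vars: "in_vars n p"
    and p_deg: "mdegree p \<le> m"
    and d_pos: "d \<ge> 1"
  shows "p - bernstein n d p
           + mconst ((1 + (\<Sum>i=1..m. C i) + C m) * (Lnorm p / real d)
                     * real ((m + 1) choose 3) * real n ^ m)
         \<in> qmodule n (2 * ((m + 1) div 2)) gbox"
proof -
  let ?C' = "\<Sum>i=1..m. C i" and ?e = "Poly_Mapping.lookup" and ?c = "Poly_Mapping.lookup p"
  let ?bound = "(1 + ?C' + C m) * (Lnorm p / real d) * real ((m + 1) choose 3) * real n ^ m"
  define err where "err k = \<bar>?c k\<bar> * (1 - mbern_weight n d (?e k) (?e k)) * (1 + ?C')" for k
  have C: "product_cert_consts C"
    using C_cert unfolding product_cert_consts_def by blast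
  have "p - bernstein n d p + mconst ?bound
      = (\<Sum>k\<in>Poly_Mapping.keys p. mconst (?c k) * (monom_poly n (?e k) - bern_monom n d (?e k)) + mconst (err k))
        + mconst (?bound - sum err (Poly_Mapping.keys p))"
    unfolding bernstein_error_eq_sum[OF p_vars] by (simp add: sum.distrib mconst_sum mconst_diff)
  moreover have "mconst (?c k) * (monom_poly n (?e k) - bern_monom n d (?e k)) + mconst (err k)
      \<in> qmodule n (2 * ((m + 1) div 2)) gbox" if "k \<in> Poly_Mapping.keys p" for k
    using p_vars p_deg that mon_deg_eq_total_exp[of k n] unfolding err_def in_vars_def mdegree_le_iff deg_le_def
    by (intro qmodule_bernstein_error_monom[OF C d_pos]) auto
  moreover have "sum err (Poly_Mapping.keys p) \<le> ?bound"
    unfolding err_def using product_cert_consts_sum_nonneg[OF C]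
    by (intro order_trans[OF sum_bernstein_error_const_le product_cert_consts_error_bound_mono[OF C]]
        d_pos n_pos p_vars p_deg) simp
  ultimately show ?thesis
    by (simp add: qmodule_add qmodule_sum qmodule_mconst)
qed

end
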